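(* Let $G$ be a locally finite connected graph with a cofinite free $\mathbb Z^d$-symmetry, with quotient graph $\overline G$ having vertex set $\overline V$ and edge set $\overline E$. Then $$m(\Delta_0)\le|\overline V|\log\frac{2|\overline E|}{|\overline V|}.$$
   Context: $\mathbb Z^d=\langle x_1,\dots,x_d\rangle$ acts freely on $G$ by automorphisms with finite quotient $\overline G$ with vertices $v_1,\dots,v_n$, lifted to $v_{i,\mathbf 0}$, $v_{i,\mathbf s}=x_1^{s_1}\cdots x_d^{s_d}v_{i,\mathbf 0}$. The Laplacian matrix is $L=D-A$ over $\mathbb Z[x_1^{\pm1},\dots,x_d^{\pm1}]$, with $D$ the diagonal degree matrix (loops counted twice) and $A_{ij}$ the sum of $x_1^{s_1}\cdots x_d^{s_d}$ over edges of $G$ from $v_{i,\mathbf 0}$ to $v_{j,\mathbf s}$; $\Delta_0=\det L$. The logarithmic Mahler measure is $m(f)=\int_{[0,1]^d}\log|f(e^{2\pi i\theta_1},\dots,e^{2\pi i\theta_d})|\,d\theta$. *)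

theory Defs
  imports "HOL-Analysis.Analysis"
begin

text \<open>A (multi)graph G: vertex type 'v (all of it), edge type 'e, each edge e has
  endpoints ends e (orientation irrelevant; a loop has both endpoints equal).\<close>

definition endpoint :: "('e \<Rightarrow> 'v \<times> 'v) \<Rightarrow> 'v \<Rightarrow> 'e \<Rightarrow> bool" where
  "endpoint ends v e \<longleftrightarrow> fst (ends e) = v \<or> snd (ends e) = v"

definition adjacent :: "('e \<Rightarrow> 'v \<times> 'v) \<Rightarrow> 'v \<Rightarrow> 'v \<Rightarrow> bool" where
  "adjacent ends u v \<longleftrightarrow> (\<exists>e. ends e = (u, v) \<or> ends e = (v, u))"

definition locally_finite :: "('e \<Rightarrow> 'v \<times> 'v) \<Rightarrow> bool" where
  "locally_finite ends \<longleftrightarrow> (\<forall>v. finite {e. endpoint ends v e})"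

definition graph_connected :: "('e \<Rightarrow> 'v \<times> 'v) \<Rightarrow> bool" where
  "graph_connected ends \<longleftrightarrow> (\<forall>u v. (adjacent ends)\<^sup>*\<^sup>* u v)"

definition group_action :: "(int ^ 'd \<Rightarrow> 'a \<Rightarrow> 'a) \<Rightarrow> bool" where
  "group_action act \<longleftrightarrow> act 0 = id \<and> (\<forall>s t. act (s + t) = act s \<circ> act t)"

definition free_action :: "(int ^ 'd \<Rightarrow> 'a \<Rightarrow> 'a) \<Rightarrow> bool" where
  "free_action act \<longleftrightarrow> group_action act \<and> (\<forall>s x. act s x = x \<longrightarrow> s = 0)"

definition acts_by_automorphisms ::
  "('e \<Rightarrow> 'v \<times> 'v) \<Rightarrow> (int ^ 'd \<Rightarrow> 'v \<Rightarrow> 'v) \<Rightarrow> (int ^ 'd \<Rightarrow> 'e \<Rightarrow> 'e) \<Rightarrow> bool" where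
  "acts_by_automorphisms ends act acte \<longleftrightarrow>
     (\<forall>s e. ends (acte s e) = (act s (fst (ends e)), act s (snd (ends e)))
          \<or> ends (acte s e) = (act s (snd (ends e)), act s (fst (ends e))))"

definition orbit :: "(int ^ 'd \<Rightarrow> 'a \<Rightarrow> 'a) \<Rightarrow> 'a \<Rightarrow> 'a set" where
  "orbit act x = range (\<lambda>s. act s x)"

text \<open>Vertex set and edge set of the quotient graph G / Z^d.\<close>
definition quot :: "(int ^ 'd \<Rightarrow> 'a \<Rightarrow> 'a) \<Rightarrow> 'a set set" where
  "quot act = range (orbit act)"

definition Zd_periodic_graph ::
  "('e \<Rightarrow> 'v \<times> 'v) \<Rightarrow> (int ^ 'd \<Rightarrow> 'v \<Rightarrow> 'v) \<Rightarrow> (int ^ 'd \<Rightarrow> 'e \<Rightarrow> 'e) \<Rightarrow> bool" where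
  "Zd_periodic_graph ends act acte \<longleftrightarrow>
     free_action act \<and> free_action acte \<and> acts_by_automorphisms ends act acte
     \<and> finite (quot act) \<and> finite (quot acte)"

definition monom_eval :: "complex ^ 'd \<Rightarrow> int ^ 'd \<Rightarrow> complex" where
  "monom_eval z s = (\<Prod>k\<in>UNIV. (z $ k) powi (s $ k))"

text \<open>Degree with loops counted twice.\<close>
definition degree_G :: "('e \<Rightarrow> 'v \<times> 'v) \<Rightarrow> 'v \<Rightarrow> nat" where
  "degree_G ends v = card {e. fst (ends e) = v} + card {e. snd (ends e) = v}"

text \<open>Entry A_ij evaluated at z: sum over edges from v_{i,0} to v_{j,s} of x^s, where
  r i is the chosen lift v_{i,0}.  Edges are counted via their ends at v_{i,0}
  (so a loop at v_{i,0} is counted twice, consistent with the degree).\<close>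
definition adj_entry ::
  "('e \<Rightarrow> 'v \<times> 'v) \<Rightarrow> (int ^ 'd \<Rightarrow> 'v \<Rightarrow> 'v) \<Rightarrow> (nat \<Rightarrow> 'v) \<Rightarrow> complex ^ 'd \<Rightarrow> nat \<Rightarrow> nat \<Rightarrow> complex" where
  "adj_entry ends act r z i j =
     (\<Sum>e\<in>{e. fst (ends e) = r i}. \<Sum>s\<in>{s. snd (ends e) = act s (r j)}. monom_eval z s)
   + (\<Sum>e\<in>{e. snd (ends e) = r i}. \<Sum>s\<in>{s. fst (ends e) = act s (r j)}. monom_eval z s)"

definition laplacian_entry ::
  "('e \<Rightarrow> 'v \<times> 'v) \<Rightarrow> (int ^ 'd \<Rightarrow> 'v \<Rightarrow> 'v) \<Rightarrow> (nat \<Rightarrow> 'v) \<Rightarrow> complex ^ 'd \<Rightarrow> nat \<Rightarrow> nat \<Rightarrow> complex" where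
  "laplacian_entry ends act r z i j =
     (if i = j then of_nat (degree_G ends (r i)) else 0) - adj_entry ends act r z i j"

definition Delta0 ::
  "('e \<Rightarrow> 'v \<times> 'v) \<Rightarrow> (int ^ 'd \<Rightarrow> 'v \<Rightarrow> 'v) \<Rightarrow> nat \<Rightarrow> (nat \<Rightarrow> 'v) \<Rightarrow> complex ^ 'd \<Rightarrow> complex" where
  "Delta0 ends act n r z =
     (\<Sum>p | p permutes {..<n}. of_int (sign p) * (\<Prod>i<n. laplacian_entry ends act r z i (p i)))"

definition torus_pt :: "real ^ 'd \<Rightarrow> complex ^ 'd" where
  "torus_pt \<theta> = (\<chi> k. exp (2 * of_real pi * \<i> * of_real (\<theta> $ k)))"

definition mahler :: "(complex ^ 'd \<Rightarrow> complex) \<Rightarrow> real" where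
  "mahler f = (LINT \<theta> : cbox (0 :: real ^ 'd) One | lborel. ln (cmod (f (torus_pt \<theta>))))"

end

theory Submission
  imports Defs "Jordan_Normal_Form.Determinant"
begin

text \<open>On the torus \<open>|z\<^sub>k| = 1\<close> the Laplacian \<open>L(z)\<close> is Hermitian and positive semidefinite: its
  form is \<open>(1/2) \<Sum> |x\<^sub>i - z\<^sup>s x\<^sub>j|\<^sup>2\<close>, summed over the edges from \<open>v\<^sub>i\<^sub>,\<^sub>0\<close> to \<open>v\<^sub>j\<^sub>,\<^sub>s\<close>.
  By connectivity a kernel vector forces \<open>z = 1\<close>, so off a null set \<open>\<Delta>\<^sub>0(z) \<noteq> 0\<close>, and
  Hadamard's inequality together with \<open>ln d \<le> ln m + d/m - 1\<close> gives
  \<open>ln |\<Delta>\<^sub>0(z)| \<le> n ln m - n + tr L(z) / m\<close> for every \<open>m > 0\<close>.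
  The average of \<open>tr L\<close> over the torus is at most \<open>\<Sum>\<^sub>i deg v\<^sub>i\<^sub>,\<^sub>0 = 2|E|\<close>, because every
  edge orbit meets the lifts \<open>v\<^sub>i\<^sub>,\<^sub>0\<close> exactly twice; the choice \<open>m = 2|E|/n\<close> gives the bound.\<close>

section \<open>Positive semidefinite matrices and Hadamard's inequality\<close>

definition herm_form :: "nat \<Rightarrow> (nat \<Rightarrow> nat \<Rightarrow> complex) \<Rightarrow> (nat \<Rightarrow> complex) \<Rightarrow> complex" where
  "herm_form n f x = (\<Sum>i<n. \<Sum>j<n. cnj (x i) * f i j * x j)"

definition pos_semidef :: "nat \<Rightarrow> (nat \<Rightarrow> nat \<Rightarrow> complex) \<Rightarrow> bool" where
  "pos_semidef n f \<longleftrightarrow> (\<forall>i<n. \<forall>j<n. f j i = cnj (f i j))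
     \<and> (\<forall>x. Im (herm_form n f x) = 0 \<and> 0 \<le> Re (herm_form n f x))"

lemma herm_form_supported:
  assumes "A \<subseteq> {..<n}" "\<And>k. k \<notin> A \<Longrightarrow> x k = 0"
  shows "herm_form n f x = (\<Sum>i\<in>A. \<Sum>j\<in>A. cnj (x i) * f i j * x j)"
proof -
  have fin: "finite A" using assms(1) finite_subset by blast
  have "(\<Sum>j<n. cnj (x i) * f i j * x j) = (\<Sum>j\<in>A. cnj (x i) * f i j * x j)" for i
    by (rule sum.mono_neutral_right) (use assms fin in auto)
  hence "herm_form n f x = (\<Sum>i<n. \<Sum>j\<in>A. cnj (x i) * f i j * x j)"
    unfolding herm_form_def by simp
  also have "\<dots> = (\<Sum>i\<in>A. \<Sum>j\<in>A. cnj (x i) * f i j * x j)"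
    by (rule sum.mono_neutral_right) (use assms fin in auto)
  finally show ?thesis .
qed

lemma herm_form_two_supported:
  assumes "i < n" "j < n" "i \<noteq> j"
  shows "herm_form n f (\<lambda>k. if k = i then a else if k = j then b else 0) =
     cnj a * f i i * a + cnj a * f i j * b + cnj b * f j i * a + cnj b * f j j * b"
  using assms by (subst herm_form_supported[where A="{i,j}"]) (auto simp: algebra_simps)

lemma pos_semidef_hermitian: "pos_semidef n f \<Longrightarrow> i < n \<Longrightarrow> j < n \<Longrightarrow> f j i = cnj (f i j)"
  unfolding pos_semidef_def by blast

lemma pos_semidef_diag:
  assumes "pos_semidef n f" "i < n"
  shows "Im (f i i) = 0" "0 \<le> Re (f i i)"
proof -
  have "herm_form n f (\<lambda>k. if k = i then 1 else 0) = f i i"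
    using assms(2) by (subst herm_form_supported[where A="{i}"]) auto
  thus "Im (f i i) = 0" "0 \<le> Re (f i i)"
    using assms(1) unfolding pos_semidef_def by metis+
qed

lemma pos_semidef_diag_eq_cmod: "pos_semidef n f \<Longrightarrow> i < n \<Longrightarrow> cmod (f i i) = Re (f i i)"
  using pos_semidef_diag by (simp add: cmod_eq_Re)

lemma affine_nonneg_imp_slope_zero:
  fixes u c :: real
  assumes "\<And>t. 0 \<le> 2 * t * u + c"
  shows "u = 0"
proof (rule ccontr)
  assume u: "u \<noteq> 0"
  have "0 \<le> 2 * (- (\<bar>c\<bar> + 1) / (2 * u)) * u + c" by (rule assms)
  also have "2 * (- (\<bar>c\<bar> + 1) / (2 * u)) * u = - (\<bar>c\<bar> + 1)" using u by (simp add: field_simps)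
  finally show False by linarith
qed

lemma pos_semidef_zero_diag_imp_zero_row:
  assumes psd: "pos_semidef n f" and i: "i < n" and fii: "f i i = 0" and j: "j < n"
  shows "f i j = 0"
proof (cases "j = i")
  case True thus ?thesis using fii by simp
next
  case False
  have herm: "f j i = cnj (f i j)" using pos_semidef_hermitian[OF psd i j] .
  have form: "Re (herm_form n f (\<lambda>k. if k = i then a else if k = j then 1 else 0))
      = 2 * Re (cnj a * f i j) + Re (f j j)" for a
    unfolding herm_form_two_supported[OF i j False[symmetric]] fii herm by simp
  have nonneg: "0 \<le> 2 * Re (cnj a * f i j) + Re (f j j)" for a
    using psd form[of a] unfolding pos_semidef_def by metis
  have "0 \<le> 2 * t * Re (f i j) + Re (f j j)" for t
    using nonneg[of "of_real t"] by (simp add: mult.assoc)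
  hence "Re (f i j) = 0" by (rule affine_nonneg_imp_slope_zero)
  moreover have "0 \<le> 2 * t * Im (f i j) + Re (f j j)" for t
    using nonneg[of "\<i> * of_real t"] by (simp add: algebra_simps)
  hence "Im (f i j) = 0" by (rule affine_nonneg_imp_slope_zero)
  ultimately show ?thesis by (simp add: complex_eq_iff)
qed

lemma det_mat_eq_0_imp_kernel:
  fixes f :: "nat \<Rightarrow> nat \<Rightarrow> 'a::idom"
  assumes "Determinant.det (Matrix.mat n n (\<lambda>(i, j). f i j)) = 0"
  obtains x j where "j < n" "x j \<noteq> 0" "\<And>i. i < n \<Longrightarrow> (\<Sum>j<n. f i j * x j) = 0"
proof -
  obtain v where v: "v \<in> carrier_vec n" "v \<noteq> 0\<^sub>v n" "Matrix.mat n n (\<lambda>(i, j). f i j) *\<^sub>v v = 0\<^sub>v n"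
    using assms det_0_iff_vec_prod_zero[of "Matrix.mat n n (\<lambda>(i, j). f i j)" n] by auto
  have "(\<Sum>j<n. f i j * vec_index v j) = 0" if "i < n" for i
    using arg_cong[OF v(3), of "\<lambda>w. vec_index w i"] v(1) that
    by (simp add: scalar_prod_def atLeast0LessThan)
  moreover obtain j where "j < n" "vec_index v j \<noteq> 0"
    using v(1,2) by (metis carrier_vecD eq_vecI index_zero_vec)
  ultimately show ?thesis using that by blast
qed

lemma det_mat_zero_row:
  assumes "i < n" "\<And>j. j < n \<Longrightarrow> f i j = 0"
  shows "Determinant.det (Matrix.mat n n (\<lambda>(i, j). f i j)) = 0"
proof -
  have "(\<Prod>k = 0..<n. Matrix.mat n n (\<lambda>(i, j). f i j) $$ (k, p k)) = 0" if "p permutes {0..<n}" for p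
    using assms that permutes_in_image[OF that, of i] by (intro prod_zero bexI[of _ i]) auto
  thus ?thesis unfolding Determinant.det_def by simp
qed

definition schur_compl :: "(nat \<Rightarrow> nat \<Rightarrow> complex) \<Rightarrow> nat \<Rightarrow> nat \<Rightarrow> complex" where
  "schur_compl f i j = f (Suc i) (Suc j) - f (Suc i) 0 * f 0 (Suc j) / f 0 0"

lemma det_schur_compl:
  fixes f :: "nat \<Rightarrow> nat \<Rightarrow> complex"
  assumes f0: "f 0 0 \<noteq> 0"
  shows "Determinant.det (Matrix.mat (Suc n) (Suc n) (\<lambda>(i, j). f i j)) =
    f 0 0 * Determinant.det (Matrix.mat n n (\<lambda>(i, j). schur_compl f i j))"
proof -
  define E where "E = Matrix.mat (Suc n) (Suc n)
    (\<lambda>(i, j). if i = j then 1 else if j = 0 then - f i 0 / f 0 0 else 0)"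
  define A where "A = Matrix.mat (Suc n) (Suc n) (\<lambda>(i, j). f i j)"
  define S where "S = Matrix.mat n n (\<lambda>(i, j). schur_compl f i j)"
  define A1 where "A1 = Matrix.mat 1 1 (\<lambda>_. f 0 0)"
  define A2 where "A2 = Matrix.mat 1 n (\<lambda>(_, j). f 0 (Suc j))"
  have E: "E \<in> carrier_mat (Suc n) (Suc n)" and A: "A \<in> carrier_mat (Suc n) (Suc n)"
    unfolding E_def A_def by auto
  have "Determinant.det E = prod_list (diag_mat E)"
    by (rule det_lower_triangular[OF _ E]) (auto simp: E_def)
  also have "diag_mat E = map (\<lambda>_. 1) [0..<Suc n]"
    unfolding diag_mat_def E_def by auto
  finally have det_E: "Determinant.det E = 1" by (simp add: map_replicate_const)
  have row_reduced: "E * A = four_block_mat A1 A2 (0\<^sub>m n 1) S"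
  proof (rule eq_matI)
    fix i j assume "i < dim_row (four_block_mat A1 A2 (0\<^sub>m n 1) S)"
      and "j < dim_col (four_block_mat A1 A2 (0\<^sub>m n 1) S)"
    hence i: "i < Suc n" and j: "j < Suc n" by (auto simp: A1_def S_def)
    have "(E * A) $$ (i, j) = (\<Sum>k<Suc n. E $$ (i, k) * f k j)"
      using i j E A by (simp add: scalar_prod_def atLeast0LessThan A_def)
    also have "\<dots> = (\<Sum>k<Suc n. (if k = i then f i j else 0)
        + (if k = 0 \<and> i \<noteq> 0 then - f i 0 / f 0 0 * f 0 j else 0))"
      using i by (intro sum.cong) (auto simp: E_def)
    also have "\<dots> = (if i = 0 then f 0 j else f i j - f i 0 / f 0 0 * f 0 j)"
      using i by (simp add: sum.distrib)
    also have "\<dots> = four_block_mat A1 A2 (0\<^sub>m n 1) S $$ (i, j)"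
      using i j f0 by (cases i; cases j) (auto simp: A1_def A2_def S_def schur_compl_def)
    finally show "(E * A) $$ (i, j) = four_block_mat A1 A2 (0\<^sub>m n 1) S $$ (i, j)" .
  qed (auto simp: E_def A_def A1_def S_def)
  have "Determinant.det A = Determinant.det (E * A)"
    using det_mult[OF E A] det_E by simp
  also have "\<dots> = Determinant.det A1 * Determinant.det S"
    unfolding row_reduced
    by (rule det_four_block_mat_lower_left_zero_col) (auto simp: A1_def A2_def S_def)
  finally show ?thesis by (simp add: A_def S_def A1_def det_single)
qed

text \<open>The vector is extended by the coordinate that minimises the form of \<open>f\<close>.\<close>

lemma herm_form_schur_compl:
  assumes psd: "pos_semidef (Suc n) f" and f0: "f 0 0 \<noteq> 0"
  shows "herm_form n (schur_compl f) x = herm_form (Suc n) f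
    (\<lambda>k. if k = 0 then - (\<Sum>j<n. f 0 (Suc j) * x j) / f 0 0 else x (k - 1))"
proof -
  define a where "a = (\<Sum>j<n. f 0 (Suc j) * x j)"
  define y where "y = (\<lambda>k. if k = 0 then - a / f 0 0 else x (k - 1))"
  define Q where "Q = (\<Sum>i<n. \<Sum>j<n. cnj (x i) * f (Suc i) (Suc j) * x j)"
  have cnj_f0: "cnj (f 0 0) = f 0 0"
    using pos_semidef_diag(1)[OF psd, of 0] by (simp add: complex_eq_iff)
  have y0: "y 0 = - a / f 0 0" and yS: "\<And>k. y (Suc k) = x k" unfolding y_def by auto
  have col: "(\<Sum>i<n. cnj (x i) * f (Suc i) 0) = cnj a"
    unfolding a_def cnj_sum
    by (intro sum.cong) (auto simp: pos_semidef_hermitian[OF psd, of 0] mult.commute)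
  have "herm_form (Suc n) f y = cnj (y 0) * f 0 0 * y 0 + cnj (y 0) * a
      + (\<Sum>i<n. cnj (x i) * f (Suc i) 0) * y 0 + Q"
    unfolding herm_form_def Q_def a_def
    by (simp only: sum.lessThan_Suc_shift yS)
       (simp add: sum.distrib sum_distrib_left sum_distrib_right algebra_simps)
  also have "\<dots> = Q - cnj a * a / f 0 0"
    unfolding col y0 using f0 cnj_f0 by (simp add: field_simps)
  also have "\<dots> = herm_form n (schur_compl f) x"
  proof -
    have "cnj a * a = (\<Sum>i<n. cnj (x i) * f (Suc i) 0) * a" by (simp only: col)
    also have "\<dots> = (\<Sum>i<n. \<Sum>j<n. cnj (x i) * (f (Suc i) 0 * f 0 (Suc j)) * x j)"
      unfolding a_def sum_product by (simp add: algebra_simps)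
    finally have "cnj a * a / f 0 0
        = (\<Sum>i<n. \<Sum>j<n. cnj (x i) * (f (Suc i) 0 * f 0 (Suc j) / f 0 0) * x j)"
      by (simp add: sum_divide_distrib algebra_simps)
    thus ?thesis
      unfolding herm_form_def schur_compl_def Q_def by (simp add: algebra_simps sum_subtractf)
  qed
  finally show ?thesis unfolding y_def a_def by simp
qed

lemma pos_semidef_schur_compl:
  assumes psd: "pos_semidef (Suc n) f" and f0: "f 0 0 \<noteq> 0"
  shows "pos_semidef n (schur_compl f)"
proof -
  have cnj_f0: "cnj (f 0 0) = f 0 0"
    using pos_semidef_diag(1)[OF psd, of 0] by (simp add: complex_eq_iff)
  have herm: "\<And>i j. i < Suc n \<Longrightarrow> j < Suc n \<Longrightarrow> f j i = cnj (f i j)"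
    using pos_semidef_hermitian[OF psd] by blast
  have "schur_compl f j i = cnj (schur_compl f i j)" if "i < n" "j < n" for i j
    using that herm[of "Suc i" "Suc j"] herm[of "Suc i" 0] herm[of 0 "Suc j"]
    by (simp add: schur_compl_def cnj_f0)
  moreover have "Im (herm_form n (schur_compl f) x) = 0 \<and> 0 \<le> Re (herm_form n (schur_compl f) x)" for x
    using psd unfolding herm_form_schur_compl[OF psd f0] pos_semidef_def by metis
  ultimately show ?thesis unfolding pos_semidef_def by blast
qed

lemma schur_compl_diag_le:
  assumes psd: "pos_semidef (Suc n) f" and i: "i < n"
  shows "Re (schur_compl f i i) \<le> Re (f (Suc i) (Suc i))"
proof -
  have "f (Suc i) 0 = cnj (f 0 (Suc i))"
    using pos_semidef_hermitian[OF psd, of 0 "Suc i"] i by simp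
  hence "f (Suc i) 0 * f 0 (Suc i) = of_real ((cmod (f 0 (Suc i)))\<^sup>2)"
    by (metis complex_norm_square mult.commute)
  moreover have "f 0 0 = of_real (Re (f 0 0))" "0 \<le> Re (f 0 0)"
    using pos_semidef_diag[OF psd, of 0] by (simp_all add: complex_eq_iff)
  ultimately have "0 \<le> Re (f (Suc i) 0 * f 0 (Suc i) / f 0 0)"
    by (metis Re_complex_of_real divide_nonneg_nonneg of_real_divide zero_le_power2)
  thus ?thesis by (simp add: schur_compl_def)
qed

theorem hadamard_pos_semidef:
  assumes "pos_semidef n f"
  shows "cmod (Determinant.det (Matrix.mat n n (\<lambda>(i, j). f i j))) \<le> (\<Prod>i<n. Re (f i i))"
  using assms
proof (induction n arbitrary: f)
  case 0
  thus ?case by (simp add: det_dim_zero)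
next
  case (Suc n)
  show ?case
  proof (cases "f 0 0 = 0")
    case True
    have "Determinant.det (Matrix.mat (Suc n) (Suc n) (\<lambda>(i, j). f i j)) = 0"
      by (rule det_mat_zero_row[of 0]) (use pos_semidef_zero_diag_imp_zero_row[OF Suc.prems _ True] in auto)
    moreover have "0 \<le> (\<Prod>i<Suc n. Re (f i i))"
      by (rule prod_nonneg) (use pos_semidef_diag(2)[OF Suc.prems] in auto)
    ultimately show ?thesis by simp
  next
    case False
    note psd_S = pos_semidef_schur_compl[OF Suc.prems False]
    have "cmod (Determinant.det (Matrix.mat n n (\<lambda>(i, j). schur_compl f i j)))
        \<le> (\<Prod>i<n. Re (schur_compl f i i))"
      by (rule Suc.IH[OF psd_S])
    also have "\<dots> \<le> (\<Prod>i<n. Re (f (Suc i) (Suc i)))"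
      by (rule prod_mono) (use pos_semidef_diag(2)[OF psd_S] schur_compl_diag_le[OF Suc.prems] in auto)
    finally show ?thesis
      unfolding det_schur_compl[where f = f, OF False] norm_mult prod.lessThan_Suc_shift
        pos_semidef_diag_eq_cmod[OF Suc.prems zero_less_Suc]
      using pos_semidef_diag(2)[OF Suc.prems, of 0] by (simp add: mult_left_mono)
  qed
qed

lemma ln_le_of_le_prod:
  fixes d :: "nat \<Rightarrow> real"
  assumes d: "\<And>i. i < n \<Longrightarrow> 0 \<le> d i" and P: "0 < P" "P \<le> (\<Prod>i<n. d i)" and m: "0 < m"
  shows "ln P \<le> real n * ln m + (\<Sum>i<n. d i) / m - real n"
proof -
  have d_pos: "0 < d i" if "i < n" for i
  proof (rule ccontr)
    assume "\<not> 0 < d i"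
    hence "d i = 0" using d[OF that] by simp
    hence "(\<Prod>i<n. d i) = 0" using that by (auto intro!: prod_zero bexI[of _ i])
    thus False using P by linarith
  qed
  have "ln P \<le> ln (\<Prod>i<n. d i)" using P by simp
  also have "\<dots> = (\<Sum>i<n. ln (d i))" by (rule ln_prod) (use d_pos in fastforce)+
  also have "\<dots> \<le> (\<Sum>i<n. ln m + (d i / m - 1))"
  proof (rule sum_mono)
    fix i assume "i \<in> {..<n}"
    hence di: "0 < d i" using d_pos by auto
    have "ln (d i / m) \<le> d i / m - 1" by (rule ln_le_minus_one) (use di m in simp)
    thus "ln (d i) \<le> ln m + (d i / m - 1)" using di m by (simp add: ln_div)
  qed
  also have "\<dots> = real n * ln m + (\<Sum>i<n. d i) / m - real n"
    by (simp add: sum.distrib sum_subtractf sum_divide_distrib[symmetric])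
  finally show ?thesis .
qed

section \<open>The Laplacian of a periodic graph\<close>

lemma free_action_zero: "free_action act \<Longrightarrow> act 0 x = x"
  unfolding free_action_def group_action_def by simp

lemma free_action_add: "free_action act \<Longrightarrow> act (s + t) x = act s (act t x)"
  unfolding free_action_def group_action_def by simp

lemma free_action_neg_cancel: "free_action act \<Longrightarrow> act (- s) (act s x) = x"
  by (metis free_action_add free_action_zero add.left_inverse)

lemma free_action_cancel_neg: "free_action act \<Longrightarrow> act s (act (- s) x) = x"
  by (metis free_action_add free_action_zero add.right_inverse)

lemma free_action_eq_iff:
  assumes free: "free_action act"
  shows "act s x = act t x \<longleftrightarrow> s = t"
proof
  assume "act s x = act t x"
  hence "act (- t + s) x = x"
    using free_action_add[OF free, of "- t" s] free_action_neg_cancel[OF free, of t] by simp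
  hence "- t + s = 0" using free unfolding free_action_def by blast
  thus "s = t" by (simp add: algebra_simps)
qed simp

lemma free_action_inj: "free_action act \<Longrightarrow> act s x = act s y \<longleftrightarrow> x = y"
  by (metis free_action_neg_cancel)

lemma mem_orbit_self: "free_action act \<Longrightarrow> x \<in> orbit act x"
  unfolding orbit_def by (metis free_action_zero rangeI)

lemma orbit_act:
  assumes free: "free_action act"
  shows "orbit act (act s x) = orbit act x"
proof -
  have "act t x = act (t - s) (act s x)" for t
    using free_action_add[OF free, of "t - s" s] by simp
  hence "act t x \<in> range (\<lambda>t. act (t + s) x)" for t
    unfolding free_action_add[OF free] by blast
  thus ?thesis unfolding orbit_def free_action_add[OF free, symmetric] by auto
qed

lemma card_add_card_eq_if_pointwise_swapped:
  assumes "finite {t. P t}" "finite {t. Q t}"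
    and "\<And>t. (P' t \<longleftrightarrow> P t) \<and> (Q' t \<longleftrightarrow> Q t) \<or> (P' t \<longleftrightarrow> Q t) \<and> (Q' t \<longleftrightarrow> P t)"
  shows "card {t. P' t} + card {t. Q' t} = card {t. P t} + card {t. Q t}"
proof -
  have un: "{t. P' t} \<union> {t. Q' t} = {t. P t} \<union> {t. Q t}"
    and int: "{t. P' t} \<inter> {t. Q' t} = {t. P t} \<inter> {t. Q t}"
    using assms(3) by blast+
  have "finite {t. P' t}" "finite {t. Q' t}"
    using assms(1,2) un by (metis finite_Un)+
  thus ?thesis using card_Un_Int assms(1,2) un int by metis
qed

lemma sum_eq_sum_card_fibres:
  assumes "finite A" "finite B" "g ` A \<subseteq> B"
  shows "(\<Sum>e\<in>A. \<phi> (g e)) = (\<Sum>p\<in>B. of_nat (card {e\<in>A. g e = p}) * (\<phi> p :: 'a::comm_semiring_1))"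
proof -
  have "(\<Sum>e\<in>A. \<phi> (g e)) = (\<Sum>p\<in>B. \<Sum>e\<in>{e\<in>A. g e = p}. \<phi> (g e))"
    by (rule sum.group[symmetric]) (use assms in auto)
  also have "\<dots> = (\<Sum>p\<in>B. \<Sum>e\<in>{e\<in>A. g e = p}. \<phi> p)"
    by (intro sum.cong) auto
  finally show ?thesis by simp
qed

locale periodic_graph =
  fixes ends :: "'e \<Rightarrow> 'v \<times> 'v" and act :: "int ^ 'd::finite \<Rightarrow> 'v \<Rightarrow> 'v"
    and acte :: "int ^ 'd \<Rightarrow> 'e \<Rightarrow> 'e" and r :: "nat \<Rightarrow> 'v"
  assumes locally_finite: "locally_finite ends"
    and periodic: "Zd_periodic_graph ends act acte"
    and lifts: "bij_betw (\<lambda>i. orbit act (r i)) {..<card (quot act)} (quot act)"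
begin

abbreviation n :: nat where "n \<equiv> card (quot act)"

lemma free_act: "free_action act" and free_acte: "free_action acte"
  and automorphisms: "acts_by_automorphisms ends act acte"
  and finite_quot: "finite (quot act)" and finite_quot_edges: "finite (quot acte)"
  using periodic unfolding Zd_periodic_graph_def by auto

lemma n_pos: "0 < n"
  using finite_quot by (auto simp: card_gt_0_iff quot_def)

lemma lift_inj:
  assumes "j < n" "j' < n" and eq: "act s (r j) = act s' (r j')"
  shows "j = j' \<and> s = s'"
proof -
  have "orbit act (r j) = orbit act (r j')"
    using arg_cong[OF eq, of "orbit act"] unfolding orbit_act[OF free_act] .
  hence "j = j'" using lifts assms(1,2) unfolding bij_betw_def inj_on_def by blast
  thus ?thesis using eq free_action_eq_iff[OF free_act] by simp
qed

lemma lift_exists: "\<exists>j s. j < n \<and> v = act s (r j)"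
proof -
  have "orbit act v \<in> (\<lambda>i. orbit act (r i)) ` {..<n}"
    using lifts unfolding bij_betw_def quot_def by simp
  then obtain j where "j < n" "orbit act v = orbit act (r j)" by auto
  thus ?thesis using mem_orbit_self[OF free_act, of v] unfolding orbit_def by auto
qed

text \<open>\<open>coord v = (j, s)\<close> says that \<open>v\<close> is the vertex \<open>v\<^sub>j\<^sub>,\<^sub>s\<close> of the paper.\<close>

definition coord :: "'v \<Rightarrow> nat \<times> (int ^ 'd)" where
  "coord v = (SOME (j, s). j < n \<and> v = act s (r j))"

lemma coord: "fst (coord v) < n" "act (snd (coord v)) (r (fst (coord v))) = v"
  using someI_ex[of "\<lambda>(j, s). j < n \<and> v = act s (r j)"] lift_exists[of v]
  unfolding coord_def by auto

lemma coord_eq_iff: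
  assumes "j < n"
  shows "coord v = (j, s) \<longleftrightarrow> v = act s (r j)"
proof
  assume "v = act s (r j)"
  thus "coord v = (j, s)"
    using lift_inj[OF coord(1)[of v] assms, where s = "snd (coord v)" and s' = s] coord(2)[of v]
    by (simp add: prod_eq_iff)
qed (use coord(2)[of v] in auto)

lemma coord_lift: "j < n \<Longrightarrow> coord (r j) = (j, 0)"
  by (simp add: coord_eq_iff free_action_zero[OF free_act])

definition out_edges :: "'v \<Rightarrow> 'e set" where "out_edges u = {e. fst (ends e) = u}"
definition in_edges :: "'v \<Rightarrow> 'e set" where "in_edges u = {e. snd (ends e) = u}"

lemma finite_out_edges: "finite (out_edges u)" and finite_in_edges: "finite (in_edges u)"
  using locally_finite unfolding locally_finite_def endpoint_def out_edges_def in_edges_def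
  by (auto intro: finite_subset[rotated])

lemma finite_edges_from_to: "finite {e. ends e = (u, v)}"
  by (rule finite_subset[OF _ finite_out_edges[of u]]) (auto simp: out_edges_def)

lemma degree_out_in: "degree_G ends u = card (out_edges u) + card (in_edges u)"
  unfolding degree_G_def out_edges_def in_edges_def ..

text \<open>Translations may reverse edges, so their invariance is shown for unordered edge sets.\<close>

definition edges_between :: "'v \<Rightarrow> 'v \<Rightarrow> 'e set" where
  "edges_between u v = {e. ends e = (u, v) \<or> ends e = (v, u)}"

text \<open>Loops are counted twice, as in the degree.\<close>

definition edge_mult :: "'v \<Rightarrow> 'v \<Rightarrow> nat" where
  "edge_mult u v = card {e. ends e = (u, v)} + card {e. ends e = (v, u)}"

lemma edge_mult_eq_card_edges_between:
  "edge_mult u v = (if u = v then 2 * card (edges_between u v) else card (edges_between u v))"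
proof (cases "u = v")
  case False
  hence "edges_between u v = {e. ends e = (u, v)} \<union> {e. ends e = (v, u)}"
    "{e. ends e = (u, v)} \<inter> {e. ends e = (v, u)} = {}"
    unfolding edges_between_def by auto
  thus ?thesis using False finite_edges_from_to by (simp add: edge_mult_def card_Un_disjoint)
qed (simp add: edge_mult_def edges_between_def)

lemma card_edges_between_le_translate:
  "card (edges_between u v) \<le> card (edges_between (act t u) (act t v))"
proof (rule card_inj_on_le[of "acte t"])
  show "inj_on (acte t) (edges_between u v)"
    using free_action_inj[OF free_acte] by (simp add: inj_on_def)
  show "acte t ` edges_between u v \<subseteq> edges_between (act t u) (act t v)"
  proof
    fix e' assume "e' \<in> acte t ` edges_between u v"
    then obtain e where e: "e \<in> edges_between u v" "e' = acte t e" by blast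
    have "ends (acte t e) = (act t (fst (ends e)), act t (snd (ends e))) \<or>
          ends (acte t e) = (act t (snd (ends e)), act t (fst (ends e)))"
      using automorphisms unfolding acts_by_automorphisms_def by blast
    thus "e' \<in> edges_between (act t u) (act t v)" using e unfolding edges_between_def by auto
  qed
  show "finite (edges_between (act t u) (act t v))"
    using finite_edges_from_to unfolding edges_between_def
    by (simp add: Collect_disj_eq)
qed

lemma edge_mult_translate: "edge_mult (act t u) (act t v) = edge_mult u v"
proof -
  have "card (edges_between (act t u) (act t v)) = card (edges_between u v)"
    using card_edges_between_le_translate[of u v t]
      card_edges_between_le_translate[of "act t u" "act t v" "- t"]
    unfolding free_action_neg_cancel[OF free_act] by simp
  thus ?thesis
    unfolding edge_mult_eq_card_edges_between using free_action_inj[OF free_act, of t u v] by auto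
qed

text \<open>The coefficient of \<open>x\<^sup>s\<close> in the entry \<open>A\<^sub>i\<^sub>j\<close> of the adjacency matrix.\<close>

definition coef :: "nat \<Rightarrow> nat \<Rightarrow> int ^ 'd \<Rightarrow> nat" where
  "coef i j s = edge_mult (r i) (act s (r j))"

lemma coef_neg: "coef j i (- s) = coef i j s"
proof -
  have "coef j i (- s) = edge_mult (act s (r j)) (act s (act (- s) (r i)))"
    unfolding coef_def edge_mult_translate ..
  thus ?thesis
    unfolding coef_def free_action_cancel_neg[OF free_act] by (simp add: edge_mult_def)
qed

definition shifts :: "(int ^ 'd) set" where
  "shifts = {s. \<exists>i<n. \<exists>j<n. 0 < coef i j s}"

lemma uminus_shifts:
  assumes "s \<in> shifts"
  shows "- s \<in> shifts"
proof -
  obtain i j where "i < n" "j < n" "0 < coef j i (- s)"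
    using assms unfolding shifts_def coef_neg by blast
  thus ?thesis unfolding shifts_def by blast
qed

lemma sum_shifts_neg: "(\<Sum>s\<in>shifts. f (- s)) = (\<Sum>s\<in>shifts. f s)"
  by (rule sum.reindex_bij_witness[of _ uminus uminus]) (auto simp: uminus_shifts)

lemma shifts_in_edge:
  assumes "i < n" "j < n" "ends e = (r i, act s (r j)) \<or> ends e = (act s (r j), r i)"
  shows "s \<in> shifts"
proof -
  have "e \<in> {e. ends e = (r i, act s (r j))} \<union> {e. ends e = (act s (r j), r i)}"
    using assms(3) by blast
  hence "0 < coef i j s"
    unfolding coef_def edge_mult_def using finite_edges_from_to
    by (auto simp: card_gt_0_iff)
  thus ?thesis unfolding shifts_def using assms(1,2) by blast
qed

lemma finite_shifts: "finite shifts"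
proof (rule finite_subset)
  show "shifts \<subseteq> (\<lambda>e. snd (coord (snd (ends e)))) ` (\<Union>i<n. out_edges (r i))
      \<union> (\<lambda>e. snd (coord (fst (ends e)))) ` (\<Union>i<n. in_edges (r i))"
  proof
    fix s assume "s \<in> shifts"
    then obtain i j where ij: "i < n" "j < n" and
      "card {e. ends e = (r i, act s (r j))} \<noteq> 0 \<or> card {e. ends e = (act s (r j), r i)} \<noteq> 0"
      unfolding shifts_def coef_def edge_mult_def by auto
    then consider e where "ends e = (r i, act s (r j))" | e where "ends e = (act s (r j), r i)"
      by (metis (mono_tags, lifting) card.empty empty_Collect_eq)
    thus "s \<in> (\<lambda>e. snd (coord (snd (ends e)))) ` (\<Union>i<n. out_edges (r i))
      \<union> (\<lambda>e. snd (coord (fst (ends e)))) ` (\<Union>i<n. in_edges (r i))"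
    proof cases
      case (1 e)
      hence "coord (snd (ends e)) = (j, s)" "e \<in> out_edges (r i)"
        using coord_eq_iff[OF ij(2)] by (auto simp: out_edges_def)
      thus ?thesis using ij(1) by (intro UnI1 image_eqI[of _ _ e]) auto
    next
      case (2 e)
      hence "coord (fst (ends e)) = (j, s)" "e \<in> in_edges (r i)"
        using coord_eq_iff[OF ij(2)] by (auto simp: in_edges_def)
      thus ?thesis using ij(1) by (intro UnI2 image_eqI[of _ _ e]) auto
    qed
  qed
qed (use finite_out_edges finite_in_edges in auto)

lemma sum_edges_at_lift:
  assumes i: "i < n"
  shows "(\<Sum>e\<in>out_edges (r i). \<phi> (coord (snd (ends e))))
       + (\<Sum>e\<in>in_edges (r i). \<phi> (coord (fst (ends e))))
     = (\<Sum>j<n. \<Sum>s\<in>shifts. of_nat (coef i j s) * (\<phi> (j, s) :: 'a::comm_semiring_1))"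
proof -
  have fin: "finite ({..<n} \<times> shifts)" using finite_shifts by simp
  have fibre_out: "{e\<in>out_edges (r i). coord (snd (ends e)) = (j, s)} = {e. ends e = (r i, act s (r j))}"
    and fibre_in: "{e\<in>in_edges (r i). coord (fst (ends e)) = (j, s)} = {e. ends e = (act s (r j), r i)}"
    if "j < n" for j s
    using coord_eq_iff[OF that] by (auto simp: out_edges_def in_edges_def prod_eq_iff)
  have "coord (snd (ends e)) \<in> {..<n} \<times> shifts" if e: "e \<in> out_edges (r i)" for e
  proof (cases "coord (snd (ends e))")
    case (Pair j s)
    with coord(1)[of "snd (ends e)"] have j: "j < n" by simp
    with e Pair have "ends e = (r i, act s (r j))" using fibre_out by blast
    thus ?thesis using shifts_in_edge[OF i j] j Pair by auto
  qed
  moreover have "coord (fst (ends e)) \<in> {..<n} \<times> shifts" if e: "e \<in> in_edges (r i)" for e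
  proof (cases "coord (fst (ends e))")
    case (Pair j s)
    with coord(1)[of "fst (ends e)"] have j: "j < n" by simp
    with e Pair have "ends e = (act s (r j), r i)" using fibre_in by blast
    thus ?thesis using shifts_in_edge[OF i j] j Pair by auto
  qed
  ultimately have out: "(\<lambda>e. coord (snd (ends e))) ` out_edges (r i) \<subseteq> {..<n} \<times> shifts"
    and "in": "(\<lambda>e. coord (fst (ends e))) ` in_edges (r i) \<subseteq> {..<n} \<times> shifts"
    by blast+
  have "(\<Sum>e\<in>out_edges (r i). \<phi> (coord (snd (ends e))))
       + (\<Sum>e\<in>in_edges (r i). \<phi> (coord (fst (ends e))))
     = (\<Sum>p\<in>{..<n} \<times> shifts. (of_nat (card {e\<in>out_edges (r i). coord (snd (ends e)) = p})
          + of_nat (card {e\<in>in_edges (r i). coord (fst (ends e)) = p})) * \<phi> p)"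
    unfolding sum_eq_sum_card_fibres[OF finite_out_edges fin out, where \<phi> = \<phi>]
      sum_eq_sum_card_fibres[OF finite_in_edges fin "in", where \<phi> = \<phi>]
    by (simp add: sum.distrib distrib_right)
  also have "\<dots> = (\<Sum>(j, s)\<in>{..<n} \<times> shifts. of_nat (coef i j s) * \<phi> (j, s))"
    by (intro sum.cong) (auto simp: fibre_out fibre_in coef_def edge_mult_def)
  finally show ?thesis by (simp add: sum.cartesian_product)
qed

lemma degree_eq_sum_coef: "i < n \<Longrightarrow> degree_G ends (r i) = (\<Sum>j<n. \<Sum>s\<in>shifts. coef i j s)"
  using sum_edges_at_lift[of i "\<lambda>_. 1::nat"] by (simp add: degree_out_in)

lemma adj_entry_eq_sum_coef:
  assumes i: "i < n" and j: "j < n"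
  shows "adj_entry ends act r z i j = (\<Sum>s\<in>shifts. of_nat (coef i j s) * monom_eval z s)"
proof -
  define \<phi> where "\<phi> p = (if fst p = j then monom_eval z (snd p) else 0)" for p :: "nat \<times> (int ^ 'd)"
  have "(\<Sum>s\<in>{s. w = act s (r j)}. monom_eval z s) = \<phi> (coord w)" for w
  proof -
    have "{s. w = act s (r j)} = {s. coord w = (j, s)}"
      using coord_eq_iff[OF j, of w] by simp
    also have "\<dots> = (if fst (coord w) = j then {snd (coord w)} else {})"
      by (cases "coord w") auto
    finally have "{s. w = act s (r j)} = (if fst (coord w) = j then {snd (coord w)} else {})" .
    thus ?thesis unfolding \<phi>_def by simp
  qed
  hence "adj_entry ends act r z i j
      = (\<Sum>e\<in>out_edges (r i). \<phi> (coord (snd (ends e)))) + (\<Sum>e\<in>in_edges (r i). \<phi> (coord (fst (ends e))))"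
    unfolding adj_entry_def out_edges_def in_edges_def by simp
  also have "\<dots> = (\<Sum>k<n. \<Sum>s\<in>shifts. of_nat (coef i k s) * \<phi> (k, s))"
    by (rule sum_edges_at_lift[OF i])
  also have "\<dots> = (\<Sum>k<n. if k = j then \<Sum>s\<in>shifts. of_nat (coef i j s) * monom_eval z s else 0)"
    by (intro sum.cong) (auto simp: \<phi>_def)
  also have "\<dots> = (\<Sum>s\<in>shifts. of_nat (coef i j s) * monom_eval z s)"
    using j by simp
  finally show ?thesis .
qed

abbreviation L :: "complex ^ 'd \<Rightarrow> nat \<Rightarrow> nat \<Rightarrow> complex" where
  "L z \<equiv> laplacian_entry ends act r z"

lemma laplacian_entry_eq:
  "i < n \<Longrightarrow> j < n \<Longrightarrow> L z i j =
     (if i = j then of_nat (degree_G ends (r i)) else 0) - (\<Sum>s\<in>shifts. of_nat (coef i j s) * monom_eval z s)"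
  unfolding laplacian_entry_def adj_entry_eq_sum_coef ..

lemma Delta0_eq_det: "Delta0 ends act n r z = Determinant.det (Matrix.mat n n (\<lambda>(i, j). L z i j))"
proof -
  have "Determinant.det (Matrix.mat n n (\<lambda>(i, j). L z i j)) =
      (\<Sum>p \<in> {p. p permutes {0..<n}}. signof p * (\<Prod>i = 0..<n. L z i (p i)))"
    by (subst det_def'[where n = n]) (auto intro!: sum.cong prod.cong simp: permutes_def)
  thus ?thesis unfolding Delta0_def by (simp add: atLeast0LessThan)
qed

end

definition on_torus :: "complex ^ 'd::finite \<Rightarrow> bool" where
  "on_torus z \<longleftrightarrow> (\<forall>k. cmod (z $ k) = 1)"

lemma norm_monom_eval: "on_torus z \<Longrightarrow> cmod (monom_eval z s) = 1"
  unfolding monom_eval_def on_torus_def prod_norm[symmetric] by (simp add: norm_power_int)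

lemma cnj_monom_eval:
  assumes "on_torus z"
  shows "cnj (monom_eval z s) = monom_eval z (- s)"
proof -
  have "cnj ((z $ k) powi (s $ k)) = (z $ k) powi (- (s $ k))" for k
    using assms unfolding on_torus_def by (metis complex_cnj_power_int divide_conv_cnj inverse_eq_divide mult_1
      power_int_inverse power_int_minus)
  thus ?thesis unfolding monom_eval_def cnj_prod by simp
qed

lemma monom_eval_add:
  fixes z :: "complex ^ 'd::finite"
  shows "(\<And>k. z $ k \<noteq> 0) \<Longrightarrow> monom_eval z (s + t) = monom_eval z s * monom_eval z t"
  unfolding monom_eval_def prod.distrib[symmetric] by (simp add: power_int_add)

lemma monom_eval_zero: "monom_eval (z :: complex ^ 'd::finite) 0 = 1"
  unfolding monom_eval_def by simp

lemma monom_eval_axis: "monom_eval (z :: complex ^ 'd::finite) (axis k 1) = z $ k"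
proof -
  have "(z $ k') powi (axis k 1 $ k') = (if k' = k then z $ k else 1)" for k'
    by (simp add: axis_def)
  thus ?thesis unfolding monom_eval_def by (simp add: prod.delta)
qed

context periodic_graph
begin

lemma translates_into_lifts: "{t. act t v \<in> r ` {..<n}} = {- snd (coord v)}"
proof -
  have "act t v \<in> r ` {..<n} \<longleftrightarrow> (\<exists>j<n. coord v = (j, - t))" for t
    using coord_eq_iff free_action_neg_cancel[OF free_act] free_action_cancel_neg[OF free_act]
    by (auto simp: image_iff) metis+
  thus ?thesis using coord(1)[of v] by (auto simp: prod_eq_iff)
qed

lemma card_incidences_at_lifts:
  "card {t. fst (ends (acte t e)) \<in> r ` {..<n}} + card {t. snd (ends (acte t e)) \<in> r ` {..<n}} = 2"
proof -
  have "card {t. fst (ends (acte t e)) \<in> r ` {..<n}} + card {t. snd (ends (acte t e)) \<in> r ` {..<n}}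
      = card {t. act t (fst (ends e)) \<in> r ` {..<n}} + card {t. act t (snd (ends e)) \<in> r ` {..<n}}"
  proof (rule card_add_card_eq_if_pointwise_swapped)
    show "finite {t. act t (fst (ends e)) \<in> r ` {..<n}}" "finite {t. act t (snd (ends e)) \<in> r ` {..<n}}"
      unfolding translates_into_lifts by simp_all
    show "(fst (ends (acte t e)) \<in> r ` {..<n} \<longleftrightarrow> act t (fst (ends e)) \<in> r ` {..<n})
        \<and> (snd (ends (acte t e)) \<in> r ` {..<n} \<longleftrightarrow> act t (snd (ends e)) \<in> r ` {..<n})
      \<or> (fst (ends (acte t e)) \<in> r ` {..<n} \<longleftrightarrow> act t (snd (ends e)) \<in> r ` {..<n})
        \<and> (snd (ends (acte t e)) \<in> r ` {..<n} \<longleftrightarrow> act t (fst (ends e)) \<in> r ` {..<n})" for t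
      using automorphisms unfolding acts_by_automorphisms_def by (metis fst_conv snd_conv)
  qed
  thus ?thesis unfolding translates_into_lifts by simp
qed

lemma card_edge_orbit_slice:
  "card {e'. Q (ends e') \<and> orbit acte e' = orbit acte e} = card {t. Q (ends (acte t e))}"
proof -
  have "{e'. Q (ends e') \<and> orbit acte e' = orbit acte e} = (\<lambda>t. acte t e) ` {t. Q (ends (acte t e))}"
  proof (intro Set.set_eqI iffI)
    fix e' assume "e' \<in> {e'. Q (ends e') \<and> orbit acte e' = orbit acte e}"
    moreover from this have "e' \<in> orbit acte e" using mem_orbit_self[OF free_acte, of e'] by simp
    ultimately show "e' \<in> (\<lambda>t. acte t e) ` {t. Q (ends (acte t e))}" unfolding orbit_def by auto
  qed (auto simp: orbit_act[OF free_acte])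
  moreover have "inj (\<lambda>t. acte t e)"
    by (auto simp: inj_on_def free_action_eq_iff[OF free_acte])
  ultimately show ?thesis by (simp add: card_image inj_on_subset)
qed

lemma card_eq_sum_edge_orbits:
  assumes "finite X"
  shows "card X = (\<Sum>C\<in>quot acte. card {e\<in>X. orbit acte e = C})"
proof -
  have "card X = (\<Sum>C\<in>quot acte. \<Sum>e\<in>{e\<in>X. orbit acte e = C}. 1)"
    unfolding card_eq_sum
    by (rule sum.group[symmetric]) (use assms finite_quot_edges in \<open>auto simp: quot_def\<close>)
  thus ?thesis by simp
qed

lemma sum_card_at_lifts:
  assumes "\<And>u. finite (B u)" "\<And>u v. u \<noteq> v \<Longrightarrow> B u \<inter> B v = {}"
  shows "(\<Sum>i<n. card (B (r i))) = card (\<Union>i<n. B (r i))"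
proof (rule card_UN_disjoint[symmetric])
  show "\<forall>i\<in>{..<n}. \<forall>j\<in>{..<n}. i \<noteq> j \<longrightarrow> B (r i) \<inter> B (r j) = {}"
    using assms(2) lifts unfolding bij_betw_def inj_on_def by metis
qed (use assms in auto)

theorem sum_degree_lifts: "(\<Sum>i<n. degree_G ends (r i)) = 2 * card (quot acte)"
proof -
  define R where "R = r ` {..<n}"
  have out: "(\<Union>i<n. out_edges (r i)) = {e. fst (ends e) \<in> R}"
    and "in": "(\<Union>i<n. in_edges (r i)) = {e. snd (ends e) \<in> R}"
    unfolding R_def out_edges_def in_edges_def by auto
  have fin: "finite {e. fst (ends e) \<in> R}" "finite {e. snd (ends e) \<in> R}"
    unfolding out[symmetric] "in"[symmetric] using finite_out_edges finite_in_edges by auto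
  have "(\<Sum>i<n. degree_G ends (r i)) = card {e. fst (ends e) \<in> R} + card {e. snd (ends e) \<in> R}"
    unfolding degree_out_in sum.distrib out[symmetric] "in"[symmetric]
    by (intro arg_cong2[where f = "(+)"] sum_card_at_lifts)
       (use finite_out_edges finite_in_edges in \<open>auto simp: out_edges_def in_edges_def\<close>)
  also have "\<dots> = (\<Sum>C\<in>quot acte. card {e. fst (ends e) \<in> R \<and> orbit acte e = C}
      + card {e. snd (ends e) \<in> R \<and> orbit acte e = C})"
    unfolding card_eq_sum_edge_orbits[OF fin(1)] card_eq_sum_edge_orbits[OF fin(2)] sum.distrib
    by simp
  also have "\<dots> = (\<Sum>C\<in>quot acte. 2)"
  proof (intro sum.cong refl)
    fix C assume "C \<in> quot acte"
    then obtain e where C: "C = orbit acte e" unfolding quot_def by auto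
    show "card {e. fst (ends e) \<in> R \<and> orbit acte e = C} + card {e. snd (ends e) \<in> R \<and> orbit acte e = C} = 2"
      unfolding C using card_edge_orbit_slice[of "\<lambda>p. fst p \<in> R" e]
        card_edge_orbit_slice[of "\<lambda>p. snd p \<in> R" e] card_incidences_at_lifts[of e]
      by (simp add: R_def)
  qed
  finally show ?thesis by simp
qed

lemma laplacian_hermitian:
  assumes i: "i < n" and j: "j < n" and z: "on_torus z"
  shows "L z j i = cnj (L z i j)"
proof -
  have "cnj (\<Sum>s\<in>shifts. of_nat (coef i j s) * monom_eval z s)
      = (\<Sum>s\<in>shifts. of_nat (coef j i (- s)) * monom_eval z (- s))"
    unfolding cnj_sum coef_neg by (simp add: cnj_monom_eval[OF z])
  also have "\<dots> = (\<Sum>s\<in>shifts. of_nat (coef j i s) * monom_eval z s)"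
    by (rule sum_shifts_neg)
  finally show ?thesis unfolding laplacian_entry_eq[OF i j] laplacian_entry_eq[OF j i] by auto
qed

lemma sum_coef_swap:
  "(\<Sum>i<n. \<Sum>j<n. \<Sum>s\<in>shifts. of_nat (coef i j s) * F i j s)
     = (\<Sum>i<n. \<Sum>j<n. \<Sum>s\<in>shifts. of_nat (coef i j s) * (F j i (- s) :: complex))"
proof -
  have "(\<Sum>i<n. \<Sum>j<n. \<Sum>s\<in>shifts. of_nat (coef i j s) * F j i (- s))
      = (\<Sum>i<n. \<Sum>j<n. \<Sum>s\<in>shifts. of_nat (coef j i (- s)) * F j i (- s))"
    unfolding coef_neg ..
  also have "\<dots> = (\<Sum>i<n. \<Sum>j<n. \<Sum>s\<in>shifts. of_nat (coef j i s) * F j i s)"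
    by (subst sum_shifts_neg[where f = "\<lambda>s. of_nat (coef _ _ s) * F _ _ s"]) (rule refl)
  also have "\<dots> = (\<Sum>j<n. \<Sum>i<n. \<Sum>s\<in>shifts. of_nat (coef j i s) * F j i s)"
    by (rule sum.swap)
  finally show ?thesis ..
qed

lemma herm_form_laplacian:
  assumes z: "on_torus z"
  shows "herm_form n (L z) x =
    of_real ((\<Sum>i<n. \<Sum>j<n. \<Sum>s\<in>shifts. real (coef i j s) * (cmod (x i - monom_eval z s * x j))\<^sup>2) / 2)"
proof -
  define G where "G i j s = cnj (x i) * x i - cnj (x i) * monom_eval z s * x j" for i j s
  have row: "(\<Sum>j<n. cnj (x i) * L z i j * x j) = (\<Sum>j<n. \<Sum>s\<in>shifts. of_nat (coef i j s) * G i j s)"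
    if i: "i < n" for i
  proof -
    have "(\<Sum>j<n. cnj (x i) * L z i j * x j) =
        (\<Sum>j<n. if i = j then cnj (x i) * of_nat (degree_G ends (r i)) * x i else 0)
      - (\<Sum>j<n. cnj (x i) * (\<Sum>s\<in>shifts. of_nat (coef i j s) * monom_eval z s) * x j)"
      unfolding sum_subtractf[symmetric]
      by (rule sum.cong) (auto simp: laplacian_entry_eq[OF i] algebra_simps)
    also have "(\<Sum>j<n. if i = j then cnj (x i) * of_nat (degree_G ends (r i)) * x i else 0)
        = (\<Sum>j<n. \<Sum>s\<in>shifts. of_nat (coef i j s) * (cnj (x i) * x i))"
      using i unfolding degree_eq_sum_coef[OF i]
      by (simp add: sum_distrib_left sum_distrib_right algebra_simps)
    also have "(\<Sum>j<n. cnj (x i) * (\<Sum>s\<in>shifts. of_nat (coef i j s) * monom_eval z s) * x j)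
        = (\<Sum>j<n. \<Sum>s\<in>shifts. of_nat (coef i j s) * (cnj (x i) * monom_eval z s * x j))"
      by (simp add: sum_distrib_right sum_distrib_left algebra_simps)
    finally show ?thesis unfolding G_def by (simp add: sum_subtractf algebra_simps)
  qed
  have G_pair: "G i j s + G j i (- s) = of_real ((cmod (x i - monom_eval z s * x j))\<^sup>2)" for i j s
  proof -
    define w where "w = monom_eval z s"
    have "cnj w * w = 1" unfolding w_def using norm_monom_eval[OF z, of s]
      by (metis complex_norm_square mult.commute norm_one of_real_1 power_one)
    moreover have "monom_eval z (- s) = cnj w" unfolding w_def by (simp add: cnj_monom_eval[OF z])
    ultimately have "G i j s + G j i (- s) = (x i - w * x j) * cnj (x i - w * x j)"
      unfolding G_def w_def by (simp add: algebra_simps)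
    thus ?thesis unfolding w_def by (metis complex_norm_square)
  qed
  \<comment> \<open>Pairing the term \<open>(i, j, s)\<close> with \<open>(j, i, -s)\<close> completes the squares.\<close>
  have "2 * herm_form n (L z) x
      = (\<Sum>i<n. \<Sum>j<n. \<Sum>s\<in>shifts. of_nat (coef i j s) * G i j s)
      + (\<Sum>i<n. \<Sum>j<n. \<Sum>s\<in>shifts. of_nat (coef i j s) * G j i (- s))"
    unfolding herm_form_def sum_coef_swap[of G, symmetric] by (simp add: row)
  also have "\<dots> = of_real (\<Sum>i<n. \<Sum>j<n. \<Sum>s\<in>shifts. real (coef i j s) * (cmod (x i - monom_eval z s * x j))\<^sup>2)"
    by (simp add: sum.distrib[symmetric] distrib_left[symmetric] G_pair)
  finally show ?thesis by (simp add: field_simps)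
qed

lemma pos_semidef_laplacian:
  assumes z: "on_torus z"
  shows "pos_semidef n (L z)"
  unfolding pos_semidef_def herm_form_laplacian[OF z]
proof (intro conjI allI impI)
  show "L z j i = cnj (L z i j)" if "i < n" "j < n" for i j
    using laplacian_hermitian[OF that z] .
qed (simp_all add: sum_nonneg)

lemma laplacian_kernel_edge:
  assumes z: "on_torus z" and kernel: "\<And>i. i < n \<Longrightarrow> (\<Sum>j<n. L z i j * x j) = 0"
    and i: "i < n" and j: "j < n" and coef: "0 < coef i j s"
  shows "x i = monom_eval z s * x j"
proof -
  define W where "W = (\<Sum>i<n. \<Sum>j<n. \<Sum>s\<in>shifts. real (coef i j s) * (cmod (x i - monom_eval z s * x j))\<^sup>2)"
  have "herm_form n (L z) x = (\<Sum>i<n. cnj (x i) * (\<Sum>j<n. L z i j * x j))"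
    unfolding herm_form_def by (simp add: sum_distrib_left mult.assoc)
  also have "\<dots> = 0" using kernel by simp
  finally have "complex_of_real (W / 2) = 0"
    using herm_form_laplacian[OF z, of x] unfolding W_def by metis
  hence "W = 0" by simp
  moreover have "s \<in> shifts" using i j coef unfolding shifts_def by blast
  ultimately have "real (coef i j s) * (cmod (x i - monom_eval z s * x j))\<^sup>2 = 0"
    using i j finite_shifts unfolding W_def by (simp add: sum_nonneg_eq_0_iff sum_nonneg)
  thus ?thesis using coef by simp
qed

definition periodic_ext :: "complex ^ 'd \<Rightarrow> (nat \<Rightarrow> complex) \<Rightarrow> 'v \<Rightarrow> complex" where
  "periodic_ext z x w = monom_eval z (snd (coord w)) * x (fst (coord w))"

lemma periodic_ext_adjacent:
  assumes z: "on_torus z" and kernel: "\<And>i. i < n \<Longrightarrow> (\<Sum>j<n. L z i j * x j) = 0"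
    and adj: "adjacent ends u w"
  shows "periodic_ext z x u = periodic_ext z x w"
proof -
  obtain i a where u: "coord u = (i, a)" by (cases "coord u")
  obtain j b where w: "coord w = (j, b)" by (cases "coord w")
  have ij: "i < n" "j < n" using coord(1)[of u] coord(1)[of w] u w by auto
  obtain e where "ends e = (u, w) \<or> ends e = (w, u)"
    using adj unfolding adjacent_def by blast
  hence pos: "0 < edge_mult u w"
    using finite_edges_from_to unfolding edge_mult_def by (auto simp: card_gt_0_iff)
  have "u = act a (r i)" using coord(2)[of u] unfolding u by simp
  hence "act (- a) u = r i" by (simp add: free_action_neg_cancel[OF free_act])
  moreover have "act (- a) w = act (- a + b) (r j)"
    unfolding free_action_add[OF free_act] using coord(2)[of w] unfolding w by simp
  ultimately have "coef i j (- a + b) = edge_mult (act (- a) u) (act (- a) w)"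
    unfolding coef_def by simp
  also have "\<dots> = edge_mult u w" by (rule edge_mult_translate)
  finally have "0 < coef i j (- a + b)" using pos by simp
  hence "x i = monom_eval z (- a + b) * x j"
    using laplacian_kernel_edge[OF z kernel ij] by blast
  hence "periodic_ext z x u = monom_eval z a * monom_eval z (- a + b) * x j"
    unfolding periodic_ext_def u by simp
  also have "\<dots> = periodic_ext z x w"
  proof -
    have z0: "z $ k \<noteq> 0" for k using z unfolding on_torus_def by (metis norm_zero zero_neq_one)
    show ?thesis unfolding periodic_ext_def w monom_eval_add[OF z0, symmetric] by simp
  qed
  finally show ?thesis .
qed

end

locale connected_periodic_graph = periodic_graph ends act acte r
  for ends :: "'e \<Rightarrow> 'v \<times> 'v" and act :: "int ^ 'd::finite \<Rightarrow> 'v \<Rightarrow> 'v"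
    and acte :: "int ^ 'd \<Rightarrow> 'e \<Rightarrow> 'e" and r :: "nat \<Rightarrow> 'v" +
  assumes connected: "graph_connected ends"
begin

lemma degree_lift_pos: "i < n \<Longrightarrow> 0 < degree_G ends (r i)"
proof -
  assume i: "i < n"
  have "r i \<noteq> act 1 (r i)"
    using free_action_eq_iff[OF free_act, of 1 "r i" 0] free_action_zero[OF free_act]
    by (auto simp: vec_eq_iff)
  moreover have "(adjacent ends)\<^sup>*\<^sup>* (r i) (act 1 (r i))"
    using connected unfolding graph_connected_def by blast
  ultimately obtain y where "adjacent ends (r i) y" by (metis converse_rtranclpE)
  then obtain e where "ends e = (r i, y) \<or> ends e = (y, r i)"
    unfolding adjacent_def by blast
  hence "e \<in> out_edges (r i) \<union> in_edges (r i)"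
    unfolding out_edges_def in_edges_def by auto
  thus ?thesis
    using finite_out_edges finite_in_edges by (auto simp: degree_out_in card_gt_0_iff)
qed

text \<open>The periodic extension of a kernel vector is constant on the connected graph; comparing
  \<open>v\<^sub>0\<^sub>,\<^sub>0\<close> with its translate by the \<open>k\<close>-th unit vector then forces \<open>z\<^sub>k = 1\<close>.\<close>

lemma det_laplacian_eq_0_imp:
  fixes z :: "complex ^ 'd"
  assumes z: "on_torus z"
    and det: "Determinant.det (Matrix.mat n n (\<lambda>(i, j). L z i j)) = 0"
  shows "z $ k = 1"
proof -
  obtain x j where j: "j < n" "x j \<noteq> 0" and kernel: "\<And>i. i < n \<Longrightarrow> (\<Sum>j<n. L z i j * x j) = 0"
    using det_mat_eq_0_imp_kernel[OF det] by blast
  note edge = periodic_ext_adjacent[OF z kernel]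
  have const: "periodic_ext z x w = periodic_ext z x (r 0)" for w
  proof -
    have "(adjacent ends)\<^sup>*\<^sup>* (r 0) w" using connected unfolding graph_connected_def by blast
    thus ?thesis by (induction rule: rtranclp_induct) (use edge in metis)+
  qed
  have "x j = x 0"
    using const[of "r j"] j(1) n_pos by (simp add: periodic_ext_def coord_lift monom_eval_zero)
  hence "x 0 \<noteq> 0" using j(2) by simp
  moreover have "coord (act (axis k 1) (r 0)) = (0, axis k 1)"
    using coord_eq_iff[OF n_pos] by simp
  ultimately show ?thesis
    using const[of "act (axis k 1) (r 0)"] n_pos
    by (simp add: periodic_ext_def coord_lift monom_eval_zero monom_eval_axis)
qed

end

section \<open>Integrals over the torus\<close>

lemma set_integral_sum:
  fixes f :: "'i \<Rightarrow> 'a \<Rightarrow> 'b::{banach, second_countable_topology}"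
  assumes "\<And>i. i \<in> I \<Longrightarrow> set_integrable M A (f i)"
  shows "set_integrable M A (\<lambda>x. \<Sum>i\<in>I. f i x)"
    and "(LINT x:A|M. (\<Sum>i\<in>I. f i x)) = (\<Sum>i\<in>I. LINT x:A|M. f i x)"
  using assms unfolding set_integrable_def set_lebesgue_integral_def scaleR_sum_right
  by (auto intro!: integral_sum)

lemma set_integral_le_max_of_AE_le:
  fixes f g :: "'a \<Rightarrow> real"
  assumes "AE x\<in>A in M. f x \<le> g x" "set_integrable M A g"
  shows "(LINT x:A|M. f x) \<le> max 0 (LINT x:A|M. g x)"
proof (cases "set_integrable M A f")
  case True
  thus ?thesis using set_integral_mono_AE[OF True assms(2,1)] by linarith
next
  case False
  thus ?thesis
    by (simp add: set_lebesgue_integral_def set_integrable_def not_integrable_integral_eq)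
qed

lemma integral_lborel_prod_Basis:
  fixes f :: "'a::euclidean_space \<Rightarrow> real \<Rightarrow> complex"
  assumes int: "\<And>b. b \<in> Basis \<Longrightarrow> integrable lborel (f b)"
    and meas: "\<And>b. b \<in> Basis \<Longrightarrow> f b \<in> borel_measurable borel"
  shows "(\<integral>x. (\<Prod>b\<in>Basis. f b (x \<bullet> b)) \<partial>(lborel::'a measure)) = (\<Prod>b\<in>Basis. integral\<^sup>L lborel (f b))"
proof -
  interpret product_sigma_finite "\<lambda>b::'a. lborel::real measure"
    by (simp add: product_sigma_finite_def lborel.sigma_finite_measure_axioms)
  have m1: "(\<lambda>g. \<Sum>b\<in>Basis. g b *\<^sub>R b) \<in> Pi\<^sub>M Basis (\<lambda>b::'a. lborel::real measure) \<rightarrow>\<^sub>M (borel :: 'a measure)"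
    by measurable
  have m2: "(\<lambda>x::'a. \<Prod>b\<in>Basis. f b (x \<bullet> b)) \<in> borel_measurable borel"
  proof (rule borel_measurable_prod)
    fix b :: 'a assume b: "b \<in> Basis"
    have "(\<lambda>x::'a. x \<bullet> b) \<in> borel_measurable borel" by measurable
    thus "(\<lambda>x::'a. f b (x \<bullet> b)) \<in> borel_measurable borel" by (rule measurable_compose[OF _ meas[OF b]])
  qed
  have "(\<integral>x. (\<Prod>b\<in>Basis. f b (x \<bullet> b)) \<partial>(lborel::'a measure))
      = (\<integral>g. (\<Prod>b\<in>Basis. f b ((\<Sum>b'\<in>Basis. g b' *\<^sub>R b') \<bullet> b)) \<partial>Pi\<^sub>M Basis (\<lambda>b. lborel))"
    by (subst lborel_eq[where 'a='a]) (rule integral_distr[OF m1 m2])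
  also have "\<dots> = (\<integral>g. (\<Prod>b\<in>Basis. f b (g b)) \<partial>Pi\<^sub>M Basis (\<lambda>b. lborel))"
    by (rule Bochner_Integration.integral_cong[OF refl]) (simp add: inner_sum_left_Basis)
  also have "\<dots> = (\<Prod>b\<in>Basis. integral\<^sup>L lborel (f b))"
    by (rule product_integral_prod) (auto intro: int)
  finally show ?thesis .
qed

definition circle_char :: "int \<Rightarrow> real \<Rightarrow> complex" where
  "circle_char m t = exp (2 * of_real pi * \<i> * of_int m * of_real t)"

lemma set_integral_circle_char:
  "(LINT t:{0..1} | lborel. circle_char m t) = (if m = 0 then 1 else 0)"
proof (cases "m = 0")
  case True
  thus ?thesis by (simp add: circle_char_def set_integral_const)
next
  case False
  define c where "c = 2 * of_real pi * \<i> * (of_int m :: complex)"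
  have c0: "c \<noteq> 0" unfolding c_def using False by simp
  have "set_integrable lborel {0..1::real} (\<lambda>t. exp (c * of_real t))"
    unfolding set_integrable_def by (rule borel_integrable_compact) (auto intro!: continuous_intros)
  hence "(LINT t:{0..1} | lborel. circle_char m t) = integral {0..1} (\<lambda>t. exp (c * of_real t))"
    unfolding circle_char_def c_def by (rule set_borel_integral_eq_integral(2))
  also have "\<dots> = (exp (c * of_real 1) - 1) / c" by (rule integral_exp) (use c0 in auto)
  also have "exp (c * of_real 1) = 1"
    using exp_integer_2pi[of "of_int m"] unfolding c_def by (simp add: mult_ac)
  finally show ?thesis using False by simp
qed

lemma prod_Basis_vec:
  fixes h :: "real ^ 'd::finite \<Rightarrow> 'b::comm_monoid_mult"
  shows "(\<Prod>b\<in>Basis. h b) = (\<Prod>k\<in>UNIV. h (axis k 1))"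
proof -
  have B: "(Basis :: (real ^ 'd) set) = range (\<lambda>k. axis k 1)" by (auto simp: Basis_vec_def)
  have "inj (\<lambda>k::'d. axis k (1::real))" by (auto simp: inj_on_def axis_eq_axis)
  thus ?thesis unfolding B by (subst prod.reindex) simp_all
qed

lemma monom_eval_torus_pt:
  fixes \<theta> :: "real ^ 'd::finite"
  shows "monom_eval (torus_pt \<theta>) s = (\<Prod>b\<in>Basis. circle_char (s $ axis_index b) (\<theta> \<bullet> b))"
proof -
  have "monom_eval (torus_pt \<theta>) s = (\<Prod>k\<in>UNIV. circle_char (s $ k) (\<theta> $ k))"
    unfolding monom_eval_def torus_pt_def circle_char_def
    by (intro prod.cong refl) (simp add: exp_power_int mult_ac)
  thus ?thesis
    unfolding prod_Basis_vec[where h = "\<lambda>b. circle_char (s $ axis_index b) (\<theta> \<bullet> b)"]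
    by (simp add: axis_index_axis cart_eq_inner_axis)
qed

lemma indicator_unit_cube:
  fixes \<theta> :: "real ^ 'd::finite"
  shows "indicator (cbox 0 One) \<theta> = (\<Prod>b\<in>Basis. indicator {0..1::real} (\<theta> \<bullet> b) :: real)"
  by (auto simp: mem_box inner_sum_Basis indicator_def prod_zero_iff)

lemma continuous_on_monom_eval_torus_pt:
  "continuous_on X (\<lambda>\<theta>::real ^ 'd::finite. monom_eval (torus_pt \<theta>) s)"
  unfolding monom_eval_torus_pt circle_char_def by (intro continuous_intros)

lemma set_integral_monom_eval_torus_pt:
  fixes s :: "int ^ 'd::finite"
  shows "(LINT \<theta>:cbox (0::real ^ 'd) One | lborel. monom_eval (torus_pt \<theta>) s) = (if s = 0 then 1 else 0)"
proof -
  define f where "f b t = indicator {0..1::real} t *\<^sub>R circle_char (s $ axis_index b) t" for b :: "real ^ 'd" and t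
  have f_int: "integrable lborel (f b)" for b
    unfolding f_def circle_char_def by (rule borel_integrable_compact) (auto intro!: continuous_intros)
  have "(LINT \<theta>:cbox (0::real ^ 'd) One | lborel. monom_eval (torus_pt \<theta>) s)
      = (\<integral>\<theta>. (\<Prod>b\<in>Basis. f b (\<theta> \<bullet> b)) \<partial>lborel)"
    unfolding set_lebesgue_integral_def indicator_unit_cube monom_eval_torus_pt f_def scaleR_conv_of_real
    by (simp add: prod.distrib)
  also have "\<dots> = (\<Prod>b\<in>Basis. integral\<^sup>L lborel (f b))"
    using f_int by (intro integral_lborel_prod_Basis) (auto simp: measurable_lborel1 borel_measurable_integrable)
  also have "\<dots> = (\<Prod>b\<in>(Basis :: (real ^ 'd) set). if s $ axis_index b = 0 then 1 else 0)"
    using set_integral_circle_char unfolding f_def set_lebesgue_integral_def by simp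
  also have "\<dots> = (if s = 0 then 1 else 0)"
  proof (cases "s = 0")
    case False
    then obtain k :: 'd where "s $ k \<noteq> 0" by (auto simp: Finite_Cartesian_Product.vec_eq_iff)
    moreover have "axis k (1::real) \<in> Basis" by (auto simp: Basis_vec_def)
    ultimately show ?thesis
      using False by (auto intro!: prod_zero bexI[of _ "axis k 1"] simp: axis_index_axis)
  qed simp
  finally show ?thesis .
qed

lemma
  fixes s :: "int ^ 'd::finite"
  shows set_integrable_Re_monom_eval_torus_pt:
      "set_integrable lborel (cbox (0::real ^ 'd) One) (\<lambda>\<theta>. Re (monom_eval (torus_pt \<theta>) s))"
    and set_integral_Re_monom_eval_torus_pt:
      "(LINT \<theta>:cbox (0::real ^ 'd) One | lborel. Re (monom_eval (torus_pt \<theta>) s)) = (if s = 0 then 1 else 0)"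
proof -
  have int: "integrable lborel (\<lambda>\<theta>::real ^ 'd. indicator (cbox 0 One) \<theta> *\<^sub>R monom_eval (torus_pt \<theta>) s)"
    by (rule borel_integrable_compact) (auto intro: continuous_on_monom_eval_torus_pt)
  have Re: "(\<lambda>\<theta>::real ^ 'd. indicator (cbox 0 One) \<theta> *\<^sub>R Re (monom_eval (torus_pt \<theta>) s)) =
      (\<lambda>\<theta>. Re (indicator (cbox 0 One) \<theta> *\<^sub>R monom_eval (torus_pt \<theta>) s))" by auto
  show "set_integrable lborel (cbox (0::real ^ 'd) One) (\<lambda>\<theta>. Re (monom_eval (torus_pt \<theta>) s))"
    unfolding set_integrable_def Re using int by (rule integrable_Re)
  show "(LINT \<theta>:cbox (0::real ^ 'd) One | lborel. Re (monom_eval (torus_pt \<theta>) s)) = (if s = 0 then 1 else 0)"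
    using integral_Re[OF int] set_integral_monom_eval_torus_pt[of s]
    unfolding set_lebesgue_integral_def Re by simp
qed

lemma on_torus_torus_pt: "on_torus (torus_pt \<theta>)"
  unfolding on_torus_def torus_pt_def by simp

lemma torus_pt_eq_1_imp_Ints:
  fixes \<theta> :: "real ^ 'd::finite"
  assumes "torus_pt \<theta> $ k = 1"
  shows "\<theta> $ k \<in> \<int>"
proof -
  have "exp (2 * of_real pi * \<i> * of_real (\<theta> $ k)) = 1" using assms unfolding torus_pt_def by simp
  then obtain j :: int where "Im (2 * of_real pi * \<i> * of_real (\<theta> $ k)) = real_of_int (2 * j) * pi"
    unfolding exp_eq_1 by blast
  hence "\<theta> $ k = j" by simp
  thus ?thesis by simp
qed

lemma
  fixes c :: real
  shows set_integrable_const_unit_cube: "set_integrable lborel (cbox (0::'a::euclidean_space) One) (\<lambda>_. c)"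
    and set_integral_const_unit_cube: "(LINT x:cbox (0::'a) One | lborel. c) = c"
proof -
  have fin: "emeasure lborel (cbox (0::'a) One) \<noteq> \<infinity>"
    using emeasure_lborel_cbox_finite by (metis less_irrefl)
  show "set_integrable lborel (cbox (0::'a) One) (\<lambda>_. c)"
    unfolding set_integrable_def using fin by simp
  show "(LINT x:cbox (0::'a) One | lborel. c) = c"
    using fin by (simp add: set_integral_const)
qed

section \<open>The Mahler measure bound\<close>

context periodic_graph
begin

definition torus_trace :: "real ^ 'd \<Rightarrow> real" where
  "torus_trace \<theta> = (\<Sum>i<n. Re (L (torus_pt \<theta>) i i))"

lemma torus_trace_eq: "torus_trace \<theta> = 2 * real (card (quot acte))
    - (\<Sum>i<n. \<Sum>s\<in>shifts. real (coef i i s) * Re (monom_eval (torus_pt \<theta>) s))"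
proof -
  have "torus_trace \<theta> = (\<Sum>i<n. real (degree_G ends (r i))
      - (\<Sum>s\<in>shifts. real (coef i i s) * Re (monom_eval (torus_pt \<theta>) s)))"
    unfolding torus_trace_def by (intro sum.cong) (simp_all add: laplacian_entry_eq Re_sum)
  also have "\<dots> = real (\<Sum>i<n. degree_G ends (r i))
      - (\<Sum>i<n. \<Sum>s\<in>shifts. real (coef i i s) * Re (monom_eval (torus_pt \<theta>) s))"
    by (simp add: sum_subtractf)
  finally show ?thesis unfolding sum_degree_lifts by simp
qed

lemma
  shows set_integrable_torus_trace: "set_integrable lborel (cbox 0 One) torus_trace"
    and set_integral_torus_trace_le: "(LINT \<theta>:cbox 0 One | lborel. torus_trace \<theta>) \<le> 2 * real (card (quot acte))"
proof -
  let ?A = "\<lambda>\<theta>. \<Sum>i<n. \<Sum>s\<in>shifts. real (coef i i s) * Re (monom_eval (torus_pt \<theta>) s)"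
  have A: "set_integrable lborel (cbox 0 One) ?A"
    "(LINT \<theta>:cbox 0 One | lborel. ?A \<theta>) = (\<Sum>i<n. \<Sum>s\<in>shifts. real (coef i i s) * (if s = 0 then 1 else 0))"
    by (simp_all add: set_integral_sum set_integrable_Re_monom_eval_torus_pt
        set_integral_Re_monom_eval_torus_pt)
  show "set_integrable lborel (cbox 0 One) torus_trace"
    unfolding torus_trace_eq[abs_def] by (rule set_integral_diff(1)[OF set_integrable_const_unit_cube A(1)])
  have "(LINT \<theta>:cbox 0 One | lborel. torus_trace \<theta>) = 2 * real (card (quot acte)) - (LINT \<theta>:cbox 0 One | lborel. ?A \<theta>)"
    unfolding torus_trace_eq set_integral_diff(2)[OF set_integrable_const_unit_cube A(1)]
    by (simp add: set_integral_const_unit_cube)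
  also have "\<dots> \<le> 2 * real (card (quot acte))"
    unfolding A(2) by (simp add: sum_nonneg)
  finally show "(LINT \<theta>:cbox 0 One | lborel. torus_trace \<theta>) \<le> 2 * real (card (quot acte))" .
qed

end

context connected_periodic_graph
begin

lemma ln_Delta0_torus_pt_le:
  assumes \<theta>: "\<theta> \<in> box 0 One" and m: "0 < m"
  shows "ln (cmod (Delta0 ends act n r (torus_pt \<theta>))) \<le> real n * ln m - real n + torus_trace \<theta> / m"
proof -
  let ?z = "torus_pt \<theta>"
  note psd = pos_semidef_laplacian[OF on_torus_torus_pt]
  have "torus_pt \<theta> $ k \<noteq> 1" for k
  proof
    assume "torus_pt \<theta> $ k = 1"
    then obtain j :: int where "\<theta> $ k = of_int j" using torus_pt_eq_1_imp_Ints by (metis Ints_cases)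
    moreover have "axis k 1 \<in> (Basis :: (real ^ 'd) set)" by (auto simp: Basis_vec_def)
    hence "0 < \<theta> $ k" "\<theta> $ k < 1"
      using \<theta> unfolding mem_box by (auto simp: inner_sum_Basis cart_eq_inner_axis)
    ultimately show False by simp
  qed
  hence "Delta0 ends act n r ?z \<noteq> 0"
    unfolding Delta0_eq_det using det_laplacian_eq_0_imp[OF on_torus_torus_pt] by blast
  moreover have "cmod (Delta0 ends act n r ?z) \<le> (\<Prod>i<n. Re (L ?z i i))"
    unfolding Delta0_eq_det by (rule hadamard_pos_semidef[OF psd])
  ultimately have "ln (cmod (Delta0 ends act n r ?z)) \<le> real n * ln m + (\<Sum>i<n. Re (L ?z i i)) / m - real n"
    using pos_semidef_diag(2)[OF psd] m by (intro ln_le_of_le_prod) auto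
  thus ?thesis unfolding torus_trace_def by simp
qed

theorem mahler_Delta0_le: "mahler (Delta0 ends act n r) \<le> real n * ln (2 * real (card (quot acte)) / real n)"
proof -
  define m where "m = 2 * real (card (quot acte)) / real n"
  have "(\<Sum>i<n. 1::real) \<le> (\<Sum>i<n. real (degree_G ends (r i)))"
    using degree_lift_pos by (intro sum_mono) (fastforce simp: Suc_le_eq)
  also have "\<dots> = 2 * real (card (quot acte))"
    unfolding of_nat_sum[symmetric] sum_degree_lifts by simp
  finally have m: "1 \<le> m" using n_pos unfolding m_def by simp
  define g where "g \<theta> = real n * ln m - real n + torus_trace \<theta> / m" for \<theta> :: "real ^ 'd"
  have ae: "AE \<theta>\<in>cbox 0 One in lborel. ln (cmod (Delta0 ends act n r (torus_pt \<theta>))) \<le> g \<theta>"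
    using ln_Delta0_torus_pt_le m unfolding g_def
    by (intro AE_I'[OF null_sets_cbox_Diff_box[of 0 One]]) auto
  have g: "set_integrable lborel (cbox 0 One) g"
    "(LINT \<theta>:cbox 0 One | lborel. g \<theta>) = real n * ln m - real n + (LINT \<theta>:cbox 0 One | lborel. torus_trace \<theta>) / m"
    unfolding g_def
    using set_integral_add[OF set_integrable_const_unit_cube set_integrable_divide[OF set_integrable_torus_trace]]
    by (simp_all add: set_integral_const_unit_cube)
  have "mahler (Delta0 ends act n r) \<le> max 0 (LINT \<theta>:cbox 0 One | lborel. g \<theta>)"
    unfolding mahler_def by (rule set_integral_le_max_of_AE_le[OF ae g(1)])
  also have "\<dots> \<le> real n * ln m"
    unfolding g(2) using set_integral_torus_trace_le m n_pos
    by (simp add: divide_right_mono m_def field_simps)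
  finally show ?thesis unfolding m_def .
qed

end

theorem mainTheorem10:
  fixes ends :: "'e \<Rightarrow> 'v \<times> 'v"
    and act :: "int ^ 'd::finite \<Rightarrow> 'v \<Rightarrow> 'v"
    and acte :: "int ^ 'd \<Rightarrow> 'e \<Rightarrow> 'e"
    and r :: "nat \<Rightarrow> 'v"
  assumes "locally_finite ends"
    and "graph_connected ends"
    and "Zd_periodic_graph ends act acte"
    and "bij_betw (\<lambda>i. orbit act (r i)) {..<card (quot act)} (quot act)"
  shows "mahler (Delta0 ends act (card (quot act)) r)
           \<le> real (card (quot act)) * ln (2 * real (card (quot acte)) / real (card (quot act)))"
proof -
  interpret connected_periodic_graph ends act acte r
    using assms by unfold_locales
  show ?thesis by (rule mahler_Delta0_le)
qed

end
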